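(* Let $K$ be an imaginary quadratic field of class number $1$ with ring of integers $\mathcal{O}_K\subset\mathbb{C}$. Let $z_1,\dots,z_l\in\mathcal{O}_K$ with $\mathrm{Re}(z_j)\neq0$, and let $m_1,\dots,m_l,k$ be integers and $n\ge1$ an integer. If $$\frac{k\pi}{n}=\sum_{j=1}^{l}m_j\arctan\frac{\mathrm{Im}(z_j)}{\mathrm{Re}(z_j)},$$ then $\frac{k\pi}{n}=j\pi/4$ for some $j\in\mathbb{Z}$ if $K=\mathbb{Q}(\sqrt{-1})$, $\frac{k\pi}{n}=j\pi/6$ for some $j\in\mathbb{Z}$ if $K=\mathbb{Q}(\sqrt{-3})$, and $\frac{k\pi}{n}=j\pi/2$ for some $j\in\mathbb{Z}$ otherwise. *)

theory Defs
  imports "HOL-Analysis.Analysis" "HOL-Computational_Algebra.Computational_Algebra"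
begin

definition imag_quad_field :: "nat \<Rightarrow> complex set" where
  "imag_quad_field d =
     {of_real (of_rat a) + of_real (of_rat b) * (\<i> * of_real (sqrt (real d))) | a b. True}"

definition ring_of_integers :: "complex set \<Rightarrow> complex set" where
  "ring_of_integers K = {z \<in> K. algebraic_int z}"

definition is_ideal_of :: "complex set \<Rightarrow> complex set \<Rightarrow> bool" where
  "is_ideal_of R I \<longleftrightarrow> I \<subseteq> R \<and> 0 \<in> I \<and> (\<forall>x\<in>I. \<forall>y\<in>I. x + y \<in> I \<and> - x \<in> I)
     \<and> (\<forall>r\<in>R. \<forall>x\<in>I. r * x \<in> I)"

definition is_principal_ideal_of :: "complex set \<Rightarrow> complex set \<Rightarrow> bool" where
  "is_principal_ideal_of R I \<longleftrightarrow> (\<exists>a\<in>R. I = {a * r | r. r \<in> R})"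

definition class_number_one :: "complex set \<Rightarrow> bool" where
  "class_number_one K \<longleftrightarrow>
     (\<forall>I. is_ideal_of (ring_of_integers K) I \<longrightarrow> is_principal_ideal_of (ring_of_integers K) I)"

end

(*
  Put \<theta> = k\<pi>/n and \<zeta> = e^(2i\<theta>). Since e^(2i arctan(b/a)) = (a + bi)/(a - bi), \<zeta> is a product
  of integer powers of the numbers z_j / cnj z_j, so it lies in K = Q(sqrt(-d)); and \<zeta>^n = 1.
  As z^k + z^-k is a monic integral polynomial in z + z^-1 (a Dickson polynomial), \<zeta> + \<zeta>^-1 = 2 Re \<zeta>
  is an algebraic integer, and it is rational, so 2 Re \<zeta> = t \<in> {0, \<plusminus>1, \<plusminus>2}. Then
  \<zeta>^2 = t\<zeta> - 1 shows that \<zeta> is a 2nd, 4th or 6th root of unity. Writing \<zeta> = x + y sqrt(-d) with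
  x, y rational, x^2 + d y^2 = 1, and squarefreeness of d turns t = 0 into d = 1 and t = \<plusminus>1 into
  d = 3. So \<zeta>^N = 1, i.e. 2N\<theta> \<in> 2\<pi>Z, with N = 2, 4 or 6 accordingly, whence \<theta> \<in> \<pi>Z/N.
*)
theory Submission
  imports Defs
begin

fun dickson :: "nat \<Rightarrow> 'a::idom poly" where
  "dickson 0 = [:2:]"
| "dickson (Suc 0) = [:0, 1:]"
| "dickson (Suc (Suc k)) = [:0, 1:] * dickson (Suc k) - dickson k"

lemma degree_lead_coeff_dickson:
  "degree (dickson k :: 'a::idom poly) = k \<and> (k > 0 \<longrightarrow> lead_coeff (dickson k :: 'a poly) = 1)"
proof (induction k rule: dickson.induct)
  case (3 k)
  let ?p = "dickson (Suc k) :: 'a poly"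
  have "?p \<noteq> 0" using 3 by (metis leading_coeff_0_iff zero_less_Suc zero_neq_one)
  then have "degree ([:0, 1:] * ?p) = Suc (Suc k)"
    using 3 by (simp add: degree_mult_eq)
  moreover have "degree (dickson k :: 'a poly) < Suc (Suc k)" using 3 by simp
  ultimately have "degree ([:0, 1:] * ?p - dickson k) = Suc (Suc k)"
    by (metis degree_add_eq_left degree_minus diff_conv_add_uminus)
  moreover have "coeff ?p (Suc k) = 1" using 3 by (metis zero_less_Suc)
  moreover have "coeff (dickson k :: 'a poly) (Suc (Suc k)) = 0"
    using 3 by (simp add: coeff_eq_0)
  ultimately show ?case by simp
qed auto

lemma coeff_dickson_Ints: "coeff (dickson k :: 'a::idom poly) i \<in> \<int>"
proof (induction k arbitrary: i rule: dickson.induct)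
  case (3 k)
  then show ?case by (cases i) auto
qed (auto simp: coeff_pCons split: nat.split)

lemma poly_dickson:
  fixes z w :: "'a::idom"
  assumes "z * w = 1"
  shows "poly (dickson k) (z + w) = z ^ k + w ^ k"
proof (induction k rule: dickson.induct)
  case (3 k)
  have "z ^ Suc (Suc k) + w ^ Suc (Suc k) = (z + w) * (z ^ Suc k + w ^ Suc k) - z * w * (z ^ k + w ^ k)"
    by (simp add: algebra_simps)
  then show ?case using 3 assms by simp
qed auto

lemma algebraic_int_add_inverse_root_unity:
  fixes z :: complex
  assumes "z ^ n = 1" "n > 0"
  shows "algebraic_int (z + inverse z)"
proof (rule algebraic_int_root[of 2 "dickson n"])
  have "z \<noteq> 0" using assms by (auto simp: power_0_left)
  then show "poly (dickson n) (z + inverse z) = 2"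
    using assms(1) by (simp add: poly_dickson power_inverse)
  show "lead_coeff (dickson n :: complex poly) = 1" "degree (dickson n :: complex poly) > 0"
    using degree_lead_coeff_dickson[of n, where 'a = complex] assms(2) by auto
qed (auto intro: coeff_dickson_Ints)

lemma Rats_power2_Ints_imp_Ints:
  fixes c :: real
  assumes "c \<in> \<rat>" "c ^ 2 \<in> \<int>"
  shows "c \<in> \<int>"
proof (rule rational_algebraic_int_is_int[OF _ assms(1)])
  from assms(2) obtain N where "c\<^sup>2 = of_int N" by (elim Ints_cases)
  then have "\<bar>c\<bar> = sqrt (of_int N)" by (metis real_sqrt_abs)
  moreover have "algebraic_int (sqrt (of_int N))" by (intro algebraic_int_sqrt int_imp_algebraic_int) simp
  ultimately show "algebraic_int c" by (metis algebraic_int_abs_real)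
qed

lemma squarefree_rat_square_mult_eq:
  fixes d e :: nat and b :: real
  assumes "squarefree d" "b \<in> \<rat>" "b ^ 2 * d = e" "e = 1 \<or> prime e"
  shows "d = e"
proof -
  have "(b * d) ^ 2 = of_nat (d * e)" using assms(3) by (simp add: power2_eq_square algebra_simps)
  moreover have "b * d \<in> \<rat>" using assms(2) by simp
  ultimately have "b * d \<in> \<int>" by (metis Ints_of_nat Rats_power2_Ints_imp_Ints)
  then obtain r :: int where "b * d = r" by (elim Ints_cases)
  define s where "s = nat \<bar>r\<bar>"
  have s: "s ^ 2 = d * e"
    using \<open>(b * d) ^ 2 = _\<close> unfolding s_def \<open>b * d = r\<close>
    by (metis (mono_tags) nat_int of_int_eq_iff of_int_of_nat_eq of_int_power of_nat_power power2_abs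
        int_nat_eq abs_ge_zero)
  show ?thesis
    using assms(4)
  proof
    assume "e = 1"
    then have "is_unit s" using s squarefreeD[OF assms(1)] by simp
    then show ?thesis using s \<open>e = 1\<close> by simp
  next
    assume "prime e"
    then have "e dvd s" using s by (metis dvd_triv_right prime_dvd_power)
    then obtain u where "s = e * u" by blast
    then have "d = e * u ^ 2"
      using s \<open>prime e\<close> by (simp add: power2_eq_square) (metis mult.left_commute)
    then have "is_unit u" using squarefreeD[OF assms(1)] by simp
    then show ?thesis using \<open>d = e * u ^ 2\<close> by simp
  qed
qed

lemma mem_imag_quad_field_iff:
  "z \<in> imag_quad_field d \<longleftrightarrow> (\<exists>x y. x \<in> \<rat> \<and> y \<in> \<rat> \<and> z = Complex x (y * sqrt d))"
proof
  assume "z \<in> imag_quad_field d"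
  then obtain a b where "z = of_real (of_rat a) + of_real (of_rat b) * (\<i> * of_real (sqrt (real d)))"
    unfolding imag_quad_field_def by auto
  then have "z = Complex (of_rat a) (of_rat b * sqrt d)" by (simp add: complex_eq_iff)
  then show "\<exists>x y. x \<in> \<rat> \<and> y \<in> \<rat> \<and> z = Complex x (y * sqrt d)"
    by (intro exI[of _ "of_rat a"] exI[of _ "of_rat b"]) simp
next
  assume "\<exists>x y. x \<in> \<rat> \<and> y \<in> \<rat> \<and> z = Complex x (y * sqrt d)"
  then obtain x y where "x \<in> \<rat>" "y \<in> \<rat>" "z = Complex x (y * sqrt d)" by blast
  then obtain a b where "z = Complex (of_rat a) (of_rat b * sqrt d)" by (metis Rats_cases)
  then have "z = of_real (of_rat a) + of_real (of_rat b) * (\<i> * of_real (sqrt (real d)))"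
    by (simp add: complex_eq_iff)
  then show "z \<in> imag_quad_field d" unfolding imag_quad_field_def by blast
qed

lemma imag_quad_field_1: "1 \<in> imag_quad_field d"
  unfolding mem_imag_quad_field_iff by (intro exI[of _ 1] exI[of _ 0]) (simp add: complex_eq_iff)

lemma imag_quad_field_mult:
  assumes "z \<in> imag_quad_field d" "w \<in> imag_quad_field d"
  shows "z * w \<in> imag_quad_field d"
proof -
  obtain x y x' y' where "x \<in> \<rat>" "y \<in> \<rat>" "x' \<in> \<rat>" "y' \<in> \<rat>"
    and "z = Complex x (y * sqrt d)" "w = Complex x' (y' * sqrt d)"
    using assms unfolding mem_imag_quad_field_iff by blast
  moreover from this have "z * w = Complex (x * x' - y * y' * d) ((x * y' + y * x') * sqrt d)"
    by (simp add: complex_eq_iff algebra_simps)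
  ultimately show ?thesis
    unfolding mem_imag_quad_field_iff by (intro exI[of _ "x * x' - y * y' * d"] exI[of _ "x * y' + y * x'"]) auto
qed

lemma imag_quad_field_inverse:
  assumes "z \<in> imag_quad_field d"
  shows "inverse z \<in> imag_quad_field d"
proof -
  obtain x y where "x \<in> \<rat>" "y \<in> \<rat>" "z = Complex x (y * sqrt d)"
    using assms unfolding mem_imag_quad_field_iff by blast
  moreover define N where "N = x\<^sup>2 + y\<^sup>2 * d"
  ultimately have "inverse z = Complex (x / N) ((- y / N) * sqrt d)" "x / N \<in> \<rat>" "- y / N \<in> \<rat>"
    by (auto simp: complex_eq_iff power_mult_distrib)
  then show ?thesis unfolding mem_imag_quad_field_iff by blast
qed

lemma imag_quad_field_cnj:
  assumes "z \<in> imag_quad_field d"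
  shows "cnj z \<in> imag_quad_field d"
proof -
  obtain x y where "x \<in> \<rat>" "y \<in> \<rat>" "z = Complex x (y * sqrt d)"
    using assms unfolding mem_imag_quad_field_iff by blast
  moreover from this have "cnj z = Complex x (- y * sqrt d)" by (simp add: complex_eq_iff)
  ultimately show ?thesis unfolding mem_imag_quad_field_iff by (intro exI[of _ x] exI[of _ "- y"]) auto
qed

lemma imag_quad_field_power:
  "z \<in> imag_quad_field d \<Longrightarrow> z ^ n \<in> imag_quad_field d"
  by (induction n) (simp_all add: imag_quad_field_mult imag_quad_field_1)

lemma imag_quad_field_power_int:
  "z \<in> imag_quad_field d \<Longrightarrow> z powi m \<in> imag_quad_field d"
  unfolding power_int_def by (simp add: imag_quad_field_power imag_quad_field_inverse)

lemma imag_quad_field_prod: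
  "(\<And>j. j \<in> A \<Longrightarrow> f j \<in> imag_quad_field d) \<Longrightarrow> (\<Prod>j\<in>A. f j) \<in> imag_quad_field d"
  by (induction A rule: infinite_finite_induct) (auto intro: imag_quad_field_mult imag_quad_field_1)

lemma unit_circle_twice_Re_int_cases:
  fixes \<zeta> :: complex
  assumes "norm \<zeta> = 1" "2 * Re \<zeta> = of_int t"
  shows "\<zeta>\<^sup>2 = 1 \<or> (t = 0 \<and> \<zeta> ^ 4 = 1) \<or> (\<bar>t\<bar> = 1 \<and> \<zeta> ^ 6 = 1)"
proof -
  have "\<bar>t\<bar> \<le> 2" using abs_Re_le_cmod[of \<zeta>] assms by linarith
  have "\<zeta>\<^sup>2 = \<zeta> * (\<zeta> + cnj \<zeta>) - \<zeta> * cnj \<zeta>" by (simp add: power2_eq_square algebra_simps)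
  also have "\<zeta> + cnj \<zeta> = of_int t" using complex_add_cnj[of \<zeta>] assms(2) by simp
  also have "\<zeta> * cnj \<zeta> = 1" using complex_norm_square[of \<zeta>] assms(1) by simp
  finally have quad: "\<zeta>\<^sup>2 = of_int t * \<zeta> - 1" by (simp add: mult.commute)
  have "\<zeta> ^ 4 = (\<zeta>\<^sup>2)\<^sup>2" "\<zeta> ^ 6 = (\<zeta> ^ 3)\<^sup>2"
    by (simp_all flip: power_mult)
  have "\<zeta> ^ 3 = \<zeta> * \<zeta>\<^sup>2" by (simp add: power2_eq_square power3_eq_cube)
  also have "\<dots> = \<zeta> * (of_int t * \<zeta> - 1)" by (simp only: quad)
  also have "\<dots> = of_int t * \<zeta>\<^sup>2 - \<zeta>" by (simp add: algebra_simps power2_eq_square)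
  also have "\<dots> = of_int t * (of_int t * \<zeta> - 1) - \<zeta>" by (simp only: quad)
  finally have cube: "\<zeta> ^ 3 = of_int t * (of_int t * \<zeta> - 1) - \<zeta>" .
  from \<open>\<bar>t\<bar> \<le> 2\<close> consider "t = -2" | "t = -1" | "t = 0" | "t = 1" | "t = 2" by linarith
  then show ?thesis
  proof cases
    case 1
    then have "(\<zeta> + 1)\<^sup>2 = \<zeta>\<^sup>2 - (of_int t * \<zeta> - 1)" by (simp add: power2_eq_square algebra_simps)
    then have "(\<zeta> + 1)\<^sup>2 = 0" using quad by simp
    then show ?thesis by (simp add: add_eq_0_iff2)
  next
    case 2
    then have "\<zeta> ^ 3 = 1" using cube by simp
    then show ?thesis using 2 \<open>\<zeta> ^ 6 = _\<close> by simp
  next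
    case 3
    then show ?thesis using quad \<open>\<zeta> ^ 4 = _\<close> by simp
  next
    case 4
    then have "\<zeta> ^ 3 = -1" using cube by simp
    then show ?thesis using 4 \<open>\<zeta> ^ 6 = _\<close> by simp
  next
    case 5
    then have "(\<zeta> - 1)\<^sup>2 = \<zeta>\<^sup>2 - (of_int t * \<zeta> - 1)" by (simp add: power2_eq_square algebra_simps)
    then have "(\<zeta> - 1)\<^sup>2 = 0" using quad by simp
    then show ?thesis by simp
  qed
qed

lemma root_of_unity_imag_quad_field:
  fixes \<zeta> :: complex
  assumes "squarefree d" "\<zeta> \<in> imag_quad_field d" "\<zeta> ^ n = 1" "n > 0"
  shows "\<zeta>\<^sup>2 = 1 \<or> (d = 1 \<and> \<zeta> ^ 4 = 1) \<or> (d = 3 \<and> \<zeta> ^ 6 = 1)"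
proof -
  obtain x y where "x \<in> \<rat>" "y \<in> \<rat>" and \<zeta>: "\<zeta> = Complex x (y * sqrt d)"
    using assms(2) unfolding mem_imag_quad_field_iff by blast
  have "norm \<zeta> ^ n = 1" using assms(3) by (metis norm_one norm_power)
  then have "norm \<zeta> = 1" using power_eq_imp_eq_base[of "norm \<zeta>" n 1] assms(4) by simp
  then have "\<zeta> * cnj \<zeta> = 1" using complex_norm_square[of \<zeta>] by simp
  then have "\<zeta> + inverse \<zeta> = of_real (2 * x)"
    using complex_add_cnj[of \<zeta>] \<zeta> by (simp add: inverse_unique)
  then have "algebraic_int (2 * x)"
    using algebraic_int_add_inverse_root_unity[OF assms(3,4)] algebraic_int_of_real_iff by metis
  then have "2 * x \<in> \<int>" using \<open>x \<in> \<rat>\<close> by (simp add: rational_algebraic_int_is_int)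
  then obtain t where t: "2 * x = of_int t" by (elim Ints_cases)
  have circle: "x\<^sup>2 + y\<^sup>2 * d = 1"
    using \<open>norm \<zeta> = 1\<close> \<zeta> by (simp add: cmod_def power_mult_distrib)
  have "2 * Re \<zeta> = of_int t" using t \<zeta> by simp
  from unit_circle_twice_Re_int_cases[OF \<open>norm \<zeta> = 1\<close> this]
  consider "\<zeta>\<^sup>2 = 1" | "t = 0" "\<zeta> ^ 4 = 1" | "\<bar>t\<bar> = 1" "\<zeta> ^ 6 = 1" by blast
  then show ?thesis
  proof cases
    case 2
    then have "y\<^sup>2 * d = 1" using circle t by simp
    then have "d = 1" using squarefree_rat_square_mult_eq[OF assms(1) \<open>y \<in> \<rat>\<close>, of 1] by simp
    then show ?thesis using 2 by simp
  next
    case 3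
    then have "t\<^sup>2 = 1" by (metis power2_abs one_power2)
    then have "(2 * x)\<^sup>2 = 1" using t by (metis of_int_1 of_int_power)
    then have "(2 * y)\<^sup>2 * d = 3" using circle by (simp add: power_mult_distrib algebra_simps)
    then have "d = 3"
      using squarefree_rat_square_mult_eq[OF assms(1), of "2 * y" 3] \<open>y \<in> \<rat>\<close> by simp
    then show ?thesis using 3 by simp
  qed simp
qed

lemma cis_double_arctan:
  fixes x y :: real
  assumes "x \<noteq> 0"
  shows "cis (2 * arctan (y / x)) = Complex x y / cnj (Complex x y)"
proof -
  define t where "t = y / x"
  have "cis (2 * arctan t) = cis (arctan t) ^ 2" by (simp add: Complex.DeMoivre)
  also have "cis (arctan t) = Complex 1 t / of_real (sqrt (1 + t\<^sup>2))"
    by (simp add: complex_eq_iff cos_arctan sin_arctan)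
  also have "(Complex 1 t / of_real (sqrt (1 + t\<^sup>2))) ^ 2
      = Complex 1 t ^ 2 / of_real ((sqrt (1 + t\<^sup>2))\<^sup>2)"
    by (simp add: power_divide flip: of_real_power)
  also have "of_real ((sqrt (1 + t\<^sup>2))\<^sup>2) = Complex 1 t * cnj (Complex 1 t)"
    by (simp add: add_pos_nonneg complex_eq_iff power2_eq_square)
  also have "Complex 1 t ^ 2 / (Complex 1 t * cnj (Complex 1 t)) = Complex 1 t / cnj (Complex 1 t)"
    by (simp add: power2_eq_square complex_eq_iff)
  also have "\<dots> = (of_real x * Complex 1 t) / cnj (of_real x * Complex 1 t)"
    using assms by simp
  also have "of_real x * Complex 1 t = Complex x y"
    using assms by (simp add: t_def complex_eq_iff)
  finally show ?thesis by (simp add: t_def)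
qed

lemma cis_sum_double_arctan:
  assumes "\<And>j. j \<in> A \<Longrightarrow> Re (z j) \<noteq> 0"
  shows "cis (2 * (\<Sum>j\<in>A. of_int (m j) * arctan (Im (z j) / Re (z j))))
           = (\<Prod>j\<in>A. (z j / cnj (z j)) powi m j)"
  using assms
proof (induction A rule: infinite_finite_induct)
  case (insert j A)
  have "cis (2 * (of_int (m j) * arctan (Im (z j) / Re (z j)))) = (z j / cnj (z j)) powi m j"
    using cis_double_arctan[of "Re (z j)" "Im (z j)"] insert.prems
    by (simp add: cis_power_int[symmetric] mult.left_commute)
  then show ?case using insert by (simp add: distrib_left cis_mult[symmetric])
qed simp_all

lemma cis_eq_1_iff: "cis \<theta> = 1 \<longleftrightarrow> (\<exists>j::int. \<theta> = 2 * pi * j)"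
  by (auto simp: cis_conv_exp exp_eq_1 algebra_simps)

lemma cis_double_power_eq_1_imp:
  assumes "cis (2 * \<theta>) ^ N = 1" "N > 0"
  shows "\<exists>j::int. \<theta> = j * pi / N"
proof -
  have "cis (real N * (2 * \<theta>)) = 1" using assms(1) by (simp add: Complex.DeMoivre)
  then obtain j :: int where "real N * (2 * \<theta>) = 2 * pi * j" unfolding cis_eq_1_iff by blast
  then have "\<theta> = j * pi / N" using assms(2) by (simp add: field_simps)
  then show ?thesis by blast
qed

theorem corollary4p3:
  fixes d :: nat and l :: nat and z :: "nat \<Rightarrow> complex" and m :: "nat \<Rightarrow> int"
    and k :: int and n :: nat
  assumes "d > 0" and "squarefree d"
    and "class_number_one (imag_quad_field d)"
    and "\<forall>j<l. z j \<in> ring_of_integers (imag_quad_field d)"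
    and "\<forall>j<l. Re (z j) \<noteq> 0"
    and "n \<ge> 1"
    and "k * pi / n = (\<Sum>j<l. m j * arctan (Im (z j) / Re (z j)))"
  shows "(d = 1 \<longrightarrow> (\<exists>j::int. k * pi / n = j * pi / 4))
       \<and> (d = 3 \<longrightarrow> (\<exists>j::int. k * pi / n = j * pi / 6))
       \<and> (d \<noteq> 1 \<and> d \<noteq> 3 \<longrightarrow> (\<exists>j::int. k * pi / n = j * pi / 2))"
proof -
  define \<theta> where "\<theta> = k * pi / n"
  define \<zeta> where "\<zeta> = cis (2 * \<theta>)"
  have "z j / cnj (z j) \<in> imag_quad_field d" if "j < l" for j
    using assms(4) that unfolding ring_of_integers_def divide_inverse
    by (simp add: imag_quad_field_mult imag_quad_field_inverse imag_quad_field_cnj)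
  moreover have "\<zeta> = (\<Prod>j<l. (z j / cnj (z j)) powi m j)"
    unfolding \<zeta>_def \<theta>_def assms(7) using assms(5) by (intro cis_sum_double_arctan) auto
  ultimately have "\<zeta> \<in> imag_quad_field d"
    by (auto intro!: imag_quad_field_prod imag_quad_field_power_int)
  moreover have "real n * (2 * \<theta>) = 2 * pi * k" using assms(6) by (simp add: \<theta>_def)
  then have "\<zeta> ^ n = 1" unfolding \<zeta>_def Complex.DeMoivre cis_eq_1_iff by blast
  ultimately consider "\<zeta>\<^sup>2 = 1" | "d = 1" "\<zeta> ^ 4 = 1" | "d = 3" "\<zeta> ^ 6 = 1"
    using root_of_unity_imag_quad_field[OF assms(2)] assms(6) by fastforce
  moreover have angle: "\<exists>j::int. k * pi / n = j * pi / N" if "\<zeta> ^ N = 1" "N > 0" for N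
    using cis_double_power_eq_1_imp that unfolding \<zeta>_def \<theta>_def by blast
  ultimately show ?thesis
  proof cases
    case 1
    moreover have "\<zeta> ^ 4 = (\<zeta>\<^sup>2)\<^sup>2" "\<zeta> ^ 6 = (\<zeta>\<^sup>2) ^ 3" by (simp_all flip: power_mult)
    ultimately show ?thesis using angle[of 2] angle[of 4] angle[of 6] by simp
  qed (use angle[of 4] angle[of 6] in simp_all)
qed

end
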